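(* Let $\mathcal{M}_{\mathbb{P}}=(\mathcal{M},\mathbb{P})$ be an uncertain parametric MDP and let $\mathcal{U}_N=\{u_1,\dots,u_N\}$, $N\ge 1$, be a set of parameter instantiations sampled independently from $\mathbb{P}$. Let $\varphi$ be a specification (a measure, a comparison operator and a threshold) whose threshold $\lambda^*(\mathcal{U}_N)$ is chosen, for any sample set $\mathcal{U}_N$, such that every sample satisfies it, i.e. $\mathcal{M}[u]\models\varphi$ for all $u\in\mathcal{U}_N$. Fix a confidence probability $\beta\in(0,1)$. Then \[\mathbb{P}^N\Big\{F(\mathcal{M}_{\mathbb{P}},\varphi)\ \ge\ (1-\beta)^{1/N}\Big\}\ \ge\ \beta .\]
   Context: A parametric MDP (pMDP) is $\mathcal{M}=(S,\mathit{Act},s_I,V,\mathcal{P})$ with finite state set $S$, finite action set $\mathit{Act}$, initial state $s_I$, finite parameter set $V$, and transition function $\mathcal{P}:S\times\mathit{Act}\times S\to\mathbb{Q}[V]$ (polynomials in the parameters). The parameter space $\mathcal{V}_{\mathcal{M}}$ consists of instantiations $u:V\to\mathbb{R}$; $\mathcal{M}[u]$ is the MDP obtained by evaluating every polynomial at $u$. All instantiations are assumed to give well-defined MDPs and to be graph-preserving (nonzero transitions get values in $(0,1]$). An uncertain pMDP (upMDP) is a pair $\mathcal{M}_{\mathbb{P}}=(\mathcal{M},\mathbb{P})$ with $\mathbb{P}$ a (possibly unknown) probability distribution over $\mathcal{V}_{\mathcal{M}}$. A specification $\varphi$ consists of a measure on MDPs (e.g. maximal/minimal reachability probability of a target set,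 expected reward until reaching a target), a comparison operator in $\{<,\le,\ge,>\}$ and a threshold $\lambda$; $\mathcal{M}[u]\models\varphi$ means the measure's value for $\mathcal{M}[u]$ compares to $\lambda$ as prescribed. The satisfaction probability is $F(\mathcal{M}_{\mathbb{P}},\varphi)=\int_{\mathcal{V}_{\mathcal{M}}} I_\varphi(u)\,d\mathbb{P}(u)$, where $I_\varphi(u)=1$ iff $\mathcal{M}[u]\models\varphi$ and $0$ otherwise (assumed measurable). $\mathbb{P}^N$ denotes the $N$-fold product measure governing the i.i.d. sample set $\mathcal{U}_N$. *)

theory Defs
  imports "HOL-Probability.Probability"
begin

text \<open>Parametric MDPs. Transitions are functions of the parameter instantiation
  (generalising polynomials in the parameters).\<close>
record ('s, 'a, 'p) pmdp =
  pstates :: "'s set"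
  pacts :: "'a set"
  pinit :: 's
  pparams :: "'p set"
  ptrans :: "'s \<Rightarrow> 'a \<Rightarrow> 's \<Rightarrow> (('p \<Rightarrow> real) \<Rightarrow> real)"

record ('s, 'a) mdp =
  states :: "'s set"
  acts :: "'a set"
  init :: 's
  trans :: "'s \<Rightarrow> 'a \<Rightarrow> 's \<Rightarrow> real"

definition inst :: "('s, 'a, 'p) pmdp \<Rightarrow> ('p \<Rightarrow> real) \<Rightarrow> ('s, 'a) mdp" where
  "inst M u = \<lparr> states = pstates M, acts = pacts M, init = pinit M,
                trans = (\<lambda>s a s'. ptrans M s a s' u) \<rparr>"

datatype cmp = Lt | Le | Ge | Gt

fun cmp_holds :: "cmp \<Rightarrow> ereal \<Rightarrow> ereal \<Rightarrow> bool" where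
  "cmp_holds Lt x l = (x < l)"
| "cmp_holds Le x l = (x \<le> l)"
| "cmp_holds Ge x l = (x \<ge> l)"
| "cmp_holds Gt x l = (x > l)"

text \<open>A specification: a measure on MDPs (e.g. max/min reachability probability,
  expected reward; values in the extended reals), a comparison operator, a threshold.\<close>
type_synonym ('s, 'a) spec = "(('s, 'a) mdp \<Rightarrow> ereal) \<times> cmp \<times> ereal"

definition models :: "('s, 'a) mdp \<Rightarrow> ('s, 'a) spec \<Rightarrow> bool" where
  "models D \<phi> = (case \<phi> of (m, c, l) \<Rightarrow> cmp_holds c (m D) l)"

definition sat_prob :: "('s, 'a, 'p) pmdp \<Rightarrow> ('p \<Rightarrow> real) measure \<Rightarrow> ('s, 'a) spec \<Rightarrow> real" where
  "sat_prob M P \<phi> = (LINT u|P. (if models (inst M u) \<phi> then 1 else 0))"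

end

theory Submission
  imports Defs
begin

text \<open>Write \<open>S l\<close> for the set of parameters whose MDP satisfies the specification at threshold
  \<open>l\<close>; \<open>S\<close> is monotone in \<open>l\<close> (antitone for \<open>\<ge>\<close> and \<open>>\<close>). Put \<open>t = (1 - \<beta>) powr (1 / N)\<close> and
  call a threshold bad if \<open>P (S l) < t\<close>. Since every nonempty set of extended reals has a
  decreasing coinitial sequence, the union \<open>U\<close> of all \<open>S l\<close> with bad \<open>l\<close> is an increasing
  countable union, hence \<open>P U \<le> t\<close>. If the threshold chosen from the samples is bad, every
  sample lies in \<open>S (lam us) \<subseteq> U\<close>, an event of probability at most \<open>t ^ N = 1 - \<beta>\<close>.\<close>

lemma ereal_decseq_coinitial:
  fixes L :: "ereal set"
  assumes "L \<noteq> {}"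
  obtains X :: "nat \<Rightarrow> ereal"
  where "decseq X" "\<And>n. \<exists>l\<in>L. l \<le> X n" "\<And>l. l \<in> L \<Longrightarrow> \<exists>n. X n \<le> l"
proof (cases "Inf L \<in> L")
  case True
  then show ?thesis by (intro that[of "\<lambda>_. Inf L"]) (auto intro: Inf_lower)
next
  case False
  have Inf_less: "Inf L < l" if "l \<in> L" for l
    using that False by (metis Inf_lower order_less_le)
  from assms obtain l1 where "l1 \<in> L" by blast
  then obtain Y :: "nat \<Rightarrow> real"
    where Y: "decseq Y" "\<And>n. Inf L < Y n" "(\<lambda>n. ereal (Y n)) \<longlonglongrightarrow> Inf L"
    using ereal_decseq_approx[OF Inf_less] by metis
  show ?thesis
  proof (rule that[of "\<lambda>n. ereal (Y n)"])
    show "decseq (\<lambda>n. ereal (Y n))"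
      using Y(1) by (simp add: decseq_def)
    show "\<exists>l\<in>L. l \<le> ereal (Y n)" for n
    proof -
      obtain l where "l \<in> L" "l < Y n"
        using Y(2)[of n] by (auto simp: Inf_less_iff)
      then show ?thesis by (auto intro: less_imp_le)
    qed
    show "\<exists>n. ereal (Y n) \<le> l" if "l \<in> L" for l
    proof -
      have "eventually (\<lambda>n. ereal (Y n) < l) sequentially"
        using Y(3) Inf_less[OF that] by (rule order_tendstoD(2))
      then show ?thesis
        unfolding eventually_sequentially by (auto intro: less_imp_le)
    qed
  qed
qed

lemma antimono_UN_eq_incseq_UN:
  fixes S :: "ereal \<Rightarrow> 'a set" and L :: "ereal set"
  assumes "antimono S" "L \<noteq> {}"
  obtains X :: "nat \<Rightarrow> ereal"
  where "incseq (\<lambda>n. S (X n))" "(\<Union>l\<in>L. S l) = (\<Union>n. S (X n))" "\<And>n. \<exists>l\<in>L. l \<le> X n"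
proof -
  obtain X :: "nat \<Rightarrow> ereal"
    where X: "decseq X" "\<And>n. \<exists>l\<in>L. l \<le> X n" "\<And>l. l \<in> L \<Longrightarrow> \<exists>n. X n \<le> l"
    using ereal_decseq_coinitial[OF assms(2)] by blast
  show ?thesis
  proof (rule that[OF _ _ X(2)])
    show "incseq (\<lambda>n. S (X n))"
      using X(1) antimonoD[OF assms(1)] by (simp add: incseq_def decseq_def)
    show "(\<Union>l\<in>L. S l) = (\<Union>n. S (X n))"
    proof (intro equalityI UN_least)
      show "S l \<subseteq> (\<Union>n. S (X n))" if "l \<in> L" for l
        using X(3)[OF that] antimonoD[OF assms(1)] by blast
      show "S (X n) \<subseteq> (\<Union>l\<in>L. S l)" for n
        using X(2)[of n] antimonoD[OF assms(1)] by blast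
    qed
  qed
qed

lemma sets_UN_antimono:
  fixes S :: "ereal \<Rightarrow> 'a set" and L :: "ereal set"
  assumes "antimono S" "\<And>l. S l \<in> sets M"
  shows "(\<Union>l\<in>L. S l) \<in> sets M"
proof (cases "L = {}")
  case False
  obtain X :: "nat \<Rightarrow> ereal" where "incseq (\<lambda>n. S (X n))"
    "(\<Union>l\<in>L. S l) = (\<Union>n. S (X n))" "\<And>n. \<exists>l\<in>L. l \<le> X n"
    using antimono_UN_eq_incseq_UN[OF assms(1) False] by blast
  with assms(2) show ?thesis by auto
qed simp

lemma measure_UN_antimono_le:
  fixes S :: "ereal \<Rightarrow> 'a set" and L :: "ereal set"
  assumes "finite_measure M" "antimono S" "\<And>l. S l \<in> sets M"
    and "0 \<le> t" "\<And>l. l \<in> L \<Longrightarrow> measure M (S l) \<le> t"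
  shows "measure M (\<Union>l\<in>L. S l) \<le> t"
proof (cases "L = {}")
  case False
  interpret finite_measure M by fact
  obtain X :: "nat \<Rightarrow> ereal" where X: "incseq (\<lambda>n. S (X n))"
    "(\<Union>l\<in>L. S l) = (\<Union>n. S (X n))" "\<And>n. \<exists>l\<in>L. l \<le> X n"
    using antimono_UN_eq_incseq_UN[OF assms(2) False] by blast
  have "(\<lambda>n. measure M (S (X n))) \<longlonglongrightarrow> measure M (\<Union>n. S (X n))"
    using X(1) assms(3) by (intro finite_Lim_measure_incseq) auto
  moreover have "measure M (S (X n)) \<le> t" for n
  proof -
    obtain l where "l \<in> L" "l \<le> X n" using X(3) by blast
    then have "measure M (S (X n)) \<le> measure M (S l)"
      using antimonoD[OF assms(2)] assms(3) by (intro finite_measure_mono) auto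
    also have "\<dots> \<le> t" using assms(5) \<open>l \<in> L\<close> .
    finally show ?thesis .
  qed
  ultimately show ?thesis
    unfolding X(2) by (intro LIMSEQ_le_const2) auto
qed (simp add: assms(4))

lemma upward_closed_in_sets_borel:
  fixes U :: "'a::{complete_linorder, linorder_topology} set"
  assumes "\<And>x y. x \<in> U \<Longrightarrow> x \<le> y \<Longrightarrow> y \<in> U"
  shows "U \<in> sets borel"
proof (cases "Inf U \<in> U")
  case True
  then have "U = {Inf U..}"
    using assms by (auto intro: Inf_lower)
  then show ?thesis by (metis borel_closed closed_atLeast)
next
  case False
  then have "U = {Inf U<..}"
  proof (intro set_eqI iffI)
    show "x \<in> {Inf U<..}" if "x \<in> U" for x
      using that False Inf_lower[of x U] by (cases "x = Inf U") auto
    show "x \<in> U" if "x \<in> {Inf U<..}" for x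
      using that assms by (auto simp: Inf_less_iff)
  qed
  then show ?thesis by (metis borel_open open_greaterThan)
qed

lemma scenario_bound:
  fixes S :: "ereal \<Rightarrow> 'a set" and lam :: "(nat \<Rightarrow> 'a) \<Rightarrow> ereal" and t :: real
  assumes prob_P: "prob_space P" and S_anti: "antimono S" and S_sets: "\<And>l. S l \<in> sets P"
    and "0 \<le> t"
    and lam_meas: "lam \<in> borel_measurable (PiM {..<N} (\<lambda>_. P))"
    and lam_sat: "\<And>us i. us \<in> space (PiM {..<N} (\<lambda>_. P)) \<Longrightarrow> i < N \<Longrightarrow> us i \<in> S (lam us)"
  shows "measure (PiM {..<N} (\<lambda>_. P))
           {us \<in> space (PiM {..<N} (\<lambda>_. P)). t \<le> measure P (S (lam us))} \<ge> 1 - t ^ N"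
proof -
  interpret finite_product_prob_space "\<lambda>_. P" "{..<N}"
    using prob_P by (simp add: finite_product_prob_space_def finite_product_sigma_finite_def
        finite_product_sigma_finite_axioms_def product_prob_space_def product_prob_space_axioms_def
        product_sigma_finite_def prob_space_imp_sigma_finite)
  let ?PM = "PiM {..<N} (\<lambda>_. P)"
  define L where "L = {l. measure P (S l) < t}"
  define U where "U = (\<Union>l\<in>L. S l)"
  have U_sets: "U \<in> sets P"
    unfolding U_def using S_anti S_sets by (rule sets_UN_antimono)
  have U_le: "measure P U \<le> t"
    unfolding U_def using prob_space.finite_measure[OF prob_P] S_anti S_sets \<open>0 \<le> t\<close>
    by (rule measure_UN_antimono_le) (simp add: L_def)
  have "L \<in> sets borel"
  proof (rule upward_closed_in_sets_borel)
    fix l l' assume "l \<in> L" "l \<le> l'"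
    have "measure P (S l') \<le> measure P (S l)"
      using antimonoD[OF S_anti \<open>l \<le> l'\<close>] S_sets by (rule M.finite_measure_mono)
    with \<open>l \<in> L\<close> show "l' \<in> L" by (simp add: L_def)
  qed
  then have bad_sets: "lam -` L \<inter> space ?PM \<in> sets ?PM"
    using lam_meas by (rule measurable_sets[rotated])
  have "lam -` L \<inter> space ?PM \<subseteq> PiE {..<N} (\<lambda>_. U)"
    using lam_sat by (auto simp: space_PiM U_def PiE_def Pi_def)
  then have "measure ?PM (lam -` L \<inter> space ?PM) \<le> measure ?PM (PiE {..<N} (\<lambda>_. U))"
    using U_sets by (intro finite_measure_mono) (auto intro: sets_PiM_I_finite)
  also have "\<dots> = measure P U ^ N"
    using U_sets by (simp add: finite_measure_PiM_emb)
  also have "\<dots> \<le> t ^ N"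
    using U_le by (intro power_mono) auto
  finally have "measure ?PM (space ?PM - (lam -` L \<inter> space ?PM)) \<ge> 1 - t ^ N"
    using prob_compl[OF bad_sets] by linarith
  moreover have "space ?PM - (lam -` L \<inter> space ?PM) = {us \<in> space ?PM. t \<le> measure P (S (lam us))}"
    by (auto simp: L_def not_less)
  ultimately show ?thesis by simp
qed

lemma scenario_bound_mono:
  fixes S :: "ereal \<Rightarrow> 'a set" and lam :: "(nat \<Rightarrow> 'a) \<Rightarrow> ereal" and t :: real
  assumes "prob_space P" "mono S" "\<And>l. S l \<in> sets P" "0 \<le> t"
    and lam_meas: "lam \<in> borel_measurable (PiM {..<N} (\<lambda>_. P))"
    and "\<And>us i. us \<in> space (PiM {..<N} (\<lambda>_. P)) \<Longrightarrow> i < N \<Longrightarrow> us i \<in> S (lam us)"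
  shows "measure (PiM {..<N} (\<lambda>_. P))
           {us \<in> space (PiM {..<N} (\<lambda>_. P)). t \<le> measure P (S (lam us))} \<ge> 1 - t ^ N"
proof -
  have "antimono (\<lambda>l. S (- l))"
    using \<open>mono S\<close> by (auto simp: antimono_def monoD)
  moreover have "(\<lambda>us. - lam us) \<in> borel_measurable (PiM {..<N} (\<lambda>_. P))"
    using lam_meas by measurable
  ultimately show ?thesis
    using scenario_bound[of P "\<lambda>l. S (- l)" t "\<lambda>us. - lam us"] assms by simp
qed

definition sat_set :: "('s, 'a, 'p) pmdp \<Rightarrow> ('p \<Rightarrow> real) measure \<Rightarrow> ('s, 'a) spec \<Rightarrow> ('p \<Rightarrow> real) set"
  where "sat_set M P \<phi> = {u \<in> space P. models (inst M u) \<phi>}"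

lemma sat_prob_eq_measure_sat_set:
  assumes "sat_set M P \<phi> \<in> sets P"
  shows "sat_prob M P \<phi> = measure P (sat_set M P \<phi>)"
proof -
  have "sat_prob M P \<phi> = (LINT u|P. indicator (sat_set M P \<phi>) u)"
    unfolding sat_prob_def
    by (rule Bochner_Integration.integral_cong) (auto simp: sat_set_def indicator_def)
  then show ?thesis
    using assms by simp
qed

lemma antimono_sat_set:
  assumes "c = Ge \<or> c = Gt"
  shows "antimono (\<lambda>l. sat_set M P (msr, c, l))"
  using assms by (auto simp: antimono_def sat_set_def models_def intro: order_trans less_le_trans)

lemma mono_sat_set:
  assumes "c = Le \<or> c = Lt"
  shows "mono (\<lambda>l. sat_set M P (msr, c, l))"
  using assms by (auto simp: mono_def sat_set_def models_def intro: order_trans less_le_trans)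

theorem theorem1:
  fixes M :: "('s, 'a, 'p) pmdp"
    and P :: "('p \<Rightarrow> real) measure"
    and msr :: "('s, 'a) mdp \<Rightarrow> ereal"
    and c :: cmp
    and lam :: "(nat \<Rightarrow> 'p \<Rightarrow> real) \<Rightarrow> ereal"
    and N :: nat
    and \<beta> :: real
  assumes "prob_space P"
    and "N \<ge> 1"
    and "0 < \<beta>" and "\<beta> < 1"
    and I_meas: "\<And>l. {u \<in> space P. models (inst M u) (msr, c, l)} \<in> sets P"
    and lam_meas: "lam \<in> borel_measurable (PiM {..<N} (\<lambda>_. P))"
    and lam_sat: "\<And>us i. us \<in> space (PiM {..<N} (\<lambda>_. P)) \<Longrightarrow> i < N \<Longrightarrow>
                    models (inst M (us i)) (msr, c, lam us)"
  shows "measure (PiM {..<N} (\<lambda>_. P))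
           {us \<in> space (PiM {..<N} (\<lambda>_. P)).
              sat_prob M P (msr, c, lam us) \<ge> (1 - \<beta>) powr (1 / real N)} \<ge> \<beta>"
proof -
  let ?S = "\<lambda>l. sat_set M P (msr, c, l)" and ?t = "(1 - \<beta>) powr (1 / real N)"
  have S_sets: "?S l \<in> sets P" for l
    using I_meas by (simp add: sat_set_def)
  have S_sat: "us i \<in> ?S (lam us)" if "us \<in> space (PiM {..<N} (\<lambda>_. P))" "i < N" for us i
    using lam_sat[OF that] that by (auto simp: sat_set_def space_PiM)
  have "?t ^ N = 1 - \<beta>"
    using \<open>N \<ge> 1\<close> \<open>\<beta> < 1\<close> by (simp add: powr_realpow[symmetric] powr_powr)
  moreover have "antimono ?S \<or> mono ?S"
    by (cases c) (simp_all add: antimono_sat_set mono_sat_set)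
  then have "measure (PiM {..<N} (\<lambda>_. P))
      {us \<in> space (PiM {..<N} (\<lambda>_. P)). ?t \<le> measure P (?S (lam us))} \<ge> 1 - ?t ^ N"
    using scenario_bound[OF \<open>prob_space P\<close> _ S_sets _ lam_meas S_sat]
      scenario_bound_mono[OF \<open>prob_space P\<close> _ S_sets _ lam_meas S_sat] by auto
  ultimately show ?thesis
    by (simp add: sat_prob_eq_measure_sat_set[OF S_sets])
qed

end
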